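(* Let $\alpha:=\frac{\sqrt{e^2+4}-e}{2e}\approx0.2178$. For $x\in[0,1]$, $y\ge0$ with $a:=|x-y|\le\alpha$, we have \[ |x\log x-y\log y|\le -a\log a, \] with the convention $0\log0=0$. *)

theory Defs
  imports "HOL-Analysis.Analysis"
begin

end

theory Submission
  imports Defs
begin

text \<open>Write \<open>s = min x y\<close> and \<open>a = \<bar>x - y\<bar>\<close>. By monotonicity of \<open>ln\<close>, the increment
  \<open>(s + a) ln (s + a) - s ln s\<close> lies between \<open>a ln a\<close> and \<open>a (s + a)\<close>. Since \<open>\<alpha> \<le> 1/4\<close>
  and \<open>ln 2 \<ge> 2/3\<close>, we have \<open>a (s + a) \<le> a (1 + a) \<le> - a ln a\<close> whenever \<open>s \<le> 1\<close>.
  The convention \<open>0 ln 0 = 0\<close> holds automatically, as \<open>ln 0 = 0\<close> in Isabelle.\<close>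

lemma xlnx_increment_ge:
  fixes s a :: real
  assumes "0 \<le> s" "0 \<le> a"
  shows "a * ln a \<le> (s + a) * ln (s + a) - s * ln s"
proof (cases "s = 0 \<or> a = 0")
  case True
  then show ?thesis by auto
next
  case False
  with assms have "0 < s" "0 < a" by auto
  then have "s * ln s \<le> s * ln (s + a)" "a * ln a \<le> a * ln (s + a)"
    by (auto intro: mult_left_mono)
  then show ?thesis by (simp add: algebra_simps)
qed

lemma xlnx_increment_le:
  fixes s a :: real
  assumes "0 \<le> s" "0 \<le> a"
  shows "(s + a) * ln (s + a) - s * ln s \<le> a * (s + a)"
proof (cases "s = 0")
  case True
  have "a * ln a \<le> a * (a - 1)"
    using assms(2) by (cases "a = 0") (auto intro: mult_left_mono ln_le_minus_one)
  with True assms(2) show ?thesis by (simp add: algebra_simps)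
next
  case False
  with assms(1) have "0 < s" by simp
  have "ln (s + a) - ln s = ln ((s + a) / s)"
    using \<open>0 < s\<close> assms(2) by (simp add: ln_div)
  also have "\<dots> \<le> a / s"
    using ln_le_minus_one[of "(s + a) / s"] \<open>0 < s\<close> assms(2) by (simp add: field_simps)
  finally have log_step: "s * (ln (s + a) - ln s) \<le> a"
    using \<open>0 < s\<close> by (simp add: field_simps)
  have "a * ln (s + a) \<le> a * (s + a - 1)"
    using \<open>0 < s\<close> assms(2) by (intro mult_left_mono ln_le_minus_one) auto
  with log_step show ?thesis by (simp add: algebra_simps)
qed

lemma ln_le_neg_one_minus:
  fixes a :: real
  assumes "0 < a" "a \<le> 1/4"
  shows "ln a \<le> - (1 + a)"
proof -
  have "ln a \<le> ln (1/4)" using assms by simp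
  also have "\<dots> = - 2 * ln 2" by (simp add: ln_div ln_realpow[of 2 2, simplified])
  also have "\<dots> \<le> - 4/3" using ln2_ge_two_thirds by simp
  finally show ?thesis using assms(2) by simp
qed

lemma xlnx_increment_abs_le:
  fixes s a :: real
  assumes "0 \<le> s" "s \<le> 1" "0 \<le> a" "a \<le> 1/4"
  shows "\<bar>(s + a) * ln (s + a) - s * ln s\<bar> \<le> - a * ln a"
proof -
  have "a * (s + a) \<le> a * (1 + a)" using assms by (intro mult_left_mono) auto
  also have "\<dots> \<le> - a * ln a"
  proof (cases "a = 0")
    case False
    then show ?thesis
      using ln_le_neg_one_minus[of a] assms(3,4) mult_left_mono[of "1 + a" "- ln a" a] by simp
  qed simp
  finally show ?thesis
    using xlnx_increment_ge[of s a] xlnx_increment_le[of s a] assms(1,3) by linarith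
qed

lemma alpha_le_quarter: "(sqrt (exp 1 ^ 2 + 4) - exp 1) / (2 * exp 1) \<le> (1/4 :: real)"
proof -
  have e: "2 \<le> exp (1::real)" using exp_ge_add_one_self[of 1] by simp
  then have "2 * 2 \<le> exp (1::real) * exp 1" by (intro mult_mono) auto
  then have "exp 1 ^ 2 + 4 \<le> (3/2 * exp (1::real))\<^sup>2" by (simp add: power2_eq_square)
  then have "sqrt (exp 1 ^ 2 + 4) \<le> sqrt ((3/2 * exp (1::real))\<^sup>2)"
    by (rule real_sqrt_le_mono)
  also have "\<dots> = 3/2 * exp 1" using e by simp
  finally show ?thesis using e by (simp add: divide_simps)
qed

theorem lemma5:
  fixes x y :: real
  defines "\<alpha> \<equiv> (sqrt (exp 1 ^ 2 + 4) - exp 1) / (2 * exp 1)"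
  assumes "0 \<le> x" "x \<le> 1" "0 \<le> y" "\<bar>x - y\<bar> \<le> \<alpha>"
  shows "\<bar>x * ln x - y * ln y\<bar> \<le> - \<bar>x - y\<bar> * ln \<bar>x - y\<bar>"
proof -
  define s a where "s = min x y" and "a = \<bar>x - y\<bar>"
  have "\<bar>x * ln x - y * ln y\<bar> = \<bar>(s + a) * ln (s + a) - s * ln s\<bar>"
    unfolding s_def a_def by (cases "x \<le> y") (auto simp: abs_minus_commute)
  also have "\<dots> \<le> - a * ln a"
  proof (rule xlnx_increment_abs_le)
    show "a \<le> 1/4" using assms(5) alpha_le_quarter unfolding a_def \<alpha>_def by linarith
  qed (use assms(2-4) in \<open>auto simp: s_def a_def\<close>)
  finally show ?thesis unfolding a_def .
qed

end
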